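(* Let $k$ be any field and $d$ a positive integer. For every $u\in k_0\langle X\rangle$, $[S_d(x_1,\ldots,x_d),u]\in R_1^{(d)}$.
   Context: $X=\{x_1,x_2,\ldots\}$ is a countably infinite set and $k_0\langle X\rangle$ is the free associative $k$-algebra (without identity) on $X$. A $T$-space is a $k$-linear subspace closed under every algebra endomorphism of $k_0\langle X\rangle$; the $T$-space generated by a subset is the smallest $T$-space containing it. $S_d(v_1,\ldots,v_d)=\sum_{\sigma\in\Sigma_d}\prod_{i=1}^d v_{\sigma(i)}$, and $R_1^{(d)}$ is the $T$-space generated by $S_d(x_1,\ldots,x_d)$. $[a,b]=ab-ba$. *)

theory Defs
  imports Main "HOL-Combinatorics.Permutations"
begin

text \<open>The free associative k-algebra without identity on generators x_0, x_1, ...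
  (indexed by nat): an element is a finitely supported coefficient function on words
  (lists of generator indices) with zero coefficient on the empty word.\<close>

type_synonym 'k fa = "nat list \<Rightarrow> 'k"

definition FA :: "('k::field) fa set" where
  "FA = {f. finite {w. f w \<noteq> 0} \<and> f [] = 0}"

definition fa_add :: "('k::field) fa \<Rightarrow> 'k fa \<Rightarrow> 'k fa" where
  "fa_add f g = (\<lambda>w. f w + g w)"

definition fa_sub :: "('k::field) fa \<Rightarrow> 'k fa \<Rightarrow> 'k fa" where
  "fa_sub f g = (\<lambda>w. f w - g w)"

definition fa_smult :: "'k::field \<Rightarrow> 'k fa \<Rightarrow> 'k fa" where
  "fa_smult c f = (\<lambda>w. c * f w)"

definition fa_zero :: "('k::field) fa" where
  "fa_zero = (\<lambda>w. 0)"

definition fa_mult :: "('k::field) fa \<Rightarrow> 'k fa \<Rightarrow> 'k fa" where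
  "fa_mult f g = (\<lambda>w. \<Sum>i\<le>length w. f (take i w) * g (drop i w))"

definition fa_var :: "nat \<Rightarrow> ('k::field) fa" where
  "fa_var i = (\<lambda>w. if w = [i] then 1 else 0)"

definition fa_comm :: "('k::field) fa \<Rightarrow> 'k fa \<Rightarrow> 'k fa" where
  "fa_comm a b = fa_sub (fa_mult a b) (fa_mult b a)"

fun fa_listprod :: "('k::field) fa list \<Rightarrow> 'k fa" where
  "fa_listprod [] = fa_zero"
| "fa_listprod [v] = v"
| "fa_listprod (v # vs) = fa_mult v (fa_listprod vs)"

definition fa_endo :: "(('k::field) fa \<Rightarrow> 'k fa) \<Rightarrow> bool" where
  "fa_endo \<phi> \<longleftrightarrow>
     (\<forall>f\<in>FA. \<phi> f \<in> FA) \<and>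
     (\<forall>f\<in>FA. \<forall>g\<in>FA. \<phi> (fa_add f g) = fa_add (\<phi> f) (\<phi> g)) \<and>
     (\<forall>c. \<forall>f\<in>FA. \<phi> (fa_smult c f) = fa_smult c (\<phi> f)) \<and>
     (\<forall>f\<in>FA. \<forall>g\<in>FA. \<phi> (fa_mult f g) = fa_mult (\<phi> f) (\<phi> g))"

definition fa_subspace :: "('k::field) fa set \<Rightarrow> bool" where
  "fa_subspace V \<longleftrightarrow> V \<subseteq> FA \<and> fa_zero \<in> V \<and>
     (\<forall>f\<in>V. \<forall>g\<in>V. fa_add f g \<in> V) \<and> (\<forall>c. \<forall>f\<in>V. fa_smult c f \<in> V)"

definition T_space :: "('k::field) fa set \<Rightarrow> bool" where
  "T_space V \<longleftrightarrow> fa_subspace V \<and> (\<forall>\<phi>. fa_endo \<phi> \<longrightarrow> (\<forall>f\<in>V. \<phi> f \<in> V))"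

definition T_gen :: "('k::field) fa set \<Rightarrow> 'k fa set" where
  "T_gen S = \<Inter>{V. T_space V \<and> S \<subseteq> V}"

text \<open>S_d(v_1,...,v_d) = sum over permutations sigma of prod_i v_{sigma(i)};
  here v is indexed by 0..d-1.\<close>
definition S_poly :: "nat \<Rightarrow> (nat \<Rightarrow> ('k::field) fa) \<Rightarrow> 'k fa" where
  "S_poly d v = (\<lambda>w. \<Sum>\<sigma>\<in>{\<sigma>. \<sigma> permutes {0..<d}}.
                     fa_listprod (map (\<lambda>i. v (\<sigma> i)) [0..<d]) w)"

end

theory Submission
  imports Defs "HOL-Library.Poly_Mapping"
begin

text \<open>Every monomial of \<open>S\<^sub>d(x\<^sub>1,\<dots>,x\<^sub>d)\<close> uses each of \<open>x\<^sub>1,\<dots>,x\<^sub>d\<close>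
  exactly once. For such a word the Leibniz rule expands \<open>[w, u]\<close> into the sum over \<open>m\<close>
  of the words obtained by replacing the letter \<open>x\<^sub>m\<close> with \<open>[x\<^sub>m, u]\<close>. Hence
  \<open>[S\<^sub>d, u] = \<Sum>\<^sub>m \<phi>\<^sub>m(S\<^sub>d)\<close>, where \<open>\<phi>\<^sub>m\<close> is the endomorphism
  \<open>x\<^sub>m \<mapsto> [x\<^sub>m, u]\<close> fixing the other generators, and every \<open>T\<close>-space containing
  \<open>S\<^sub>d\<close> contains this sum.\<close>

text \<open>Words form the free monoid, so the convolution algebra \<open>nat list \<Rightarrow>\<^sub>0 'k\<close> is the
  free associative algebra with identity; \<open>k\<^sub>0\<langle>X\<rangle>\<close> is its part with zero coefficient
  at the empty word.\<close>

instantiation list :: (type) monoid_add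
begin
definition zero_list_def: "(0::'a list) = []"
definition plus_list_def: "(xs::'a list) + ys = xs @ ys"
instance by standard (simp_all add: zero_list_def plus_list_def)
end

type_synonym 'k ncpoly = "nat list \<Rightarrow>\<^sub>0 'k"

lemma lookup_times_ncpoly:
  fixes p q :: "('k::semiring_0) ncpoly"
  shows "Poly_Mapping.lookup (p * q) w =
    (\<Sum>i\<le>length w. Poly_Mapping.lookup p (take i w) * Poly_Mapping.lookup q (drop i w))"
proof -
  let ?f = "Poly_Mapping.lookup p" and ?g = "Poly_Mapping.lookup q"
  let ?splits = "(\<lambda>i. (take i w, drop i w)) ` {..length w}"
  have fin: "finite {k. ?f k \<noteq> 0}" "finite {k. ?g k \<noteq> 0}"
    by (simp_all flip: keys.rep_eq)
  have "Poly_Mapping.lookup (p * q) w = (\<Sum>(a, b). ?f a * ?g b when w = a + b)"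
    by (simp add: times_poly_mapping.rep_eq prod_fun_unfold_prod[OF fin])
  also have "\<dots> = (\<Sum>(a, b)\<in>?splits. ?f a * ?g b when w = a + b)"
  proof (rule Sum_any.expand_superset)
    show "{ab. (case ab of (a, b) \<Rightarrow> ?f a * ?g b when w = a + b) \<noteq> 0} \<subseteq> ?splits"
    proof
      fix ab assume "ab \<in> {ab. (case ab of (a, b) \<Rightarrow> ?f a * ?g b when w = a + b) \<noteq> 0}"
      then obtain a b where "ab = (a, b)" "w = a @ b"
        by (cases ab) (auto simp: plus_list_def split: if_splits)
      then show "ab \<in> ?splits"
        by (auto intro!: image_eqI[where x = "length a"])
    qed
  qed simp
  also have "\<dots> = (\<Sum>i\<le>length w. ?f (take i w) * ?g (drop i w))"
    by (subst sum.reindex) (auto simp: inj_on_def plus_list_def, metis length_take min.absorb2)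
  finally show ?thesis .
qed

lemma lookup_Nil_times:
  "Poly_Mapping.lookup (p * q) [] = Poly_Mapping.lookup p [] * Poly_Mapping.lookup (q::'k::semiring_0 ncpoly) []"
  by (simp add: lookup_times_ncpoly)

lemma lookup_scalar_times:
  "Poly_Mapping.lookup (Poly_Mapping.single [] c * p) w = c * Poly_Mapping.lookup (p::'k::semiring_0 ncpoly) w"
proof -
  have "Poly_Mapping.lookup (Poly_Mapping.single [] c * p) w
      = (\<Sum>i\<in>{0}. Poly_Mapping.lookup (Poly_Mapping.single [] c) (take i w) * Poly_Mapping.lookup p (drop i w))"
    unfolding lookup_times_ncpoly by (rule sum.mono_neutral_right) (auto simp: lookup_single when_def)
  then show ?thesis by simp
qed

lemma lookup_times_scalar:
  "Poly_Mapping.lookup (p * Poly_Mapping.single [] c) w = Poly_Mapping.lookup (p::'k::semiring_0 ncpoly) w * c"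
proof -
  have "Poly_Mapping.lookup (p * Poly_Mapping.single [] c) w
      = (\<Sum>i\<in>{length w}.
          Poly_Mapping.lookup p (take i w) * Poly_Mapping.lookup (Poly_Mapping.single [] c) (drop i w))"
    unfolding lookup_times_ncpoly by (rule sum.mono_neutral_right) (auto simp: lookup_single when_def)
  then show ?thesis by simp
qed

lemma scalar_commute:
  fixes p :: "('k::comm_semiring_0) ncpoly"
  shows "Poly_Mapping.single [] c * p = p * Poly_Mapping.single [] c"
  by (rule poly_mapping_eqI) (simp only: lookup_scalar_times lookup_times_scalar mult.commute)

lemma single_Nil_one [simp]: "Poly_Mapping.single [] 1 = (1::'k::semiring_1 ncpoly)"
  unfolding zero_list_def[symmetric] by (rule single_one)

lemma single_Nil_mult:
  "Poly_Mapping.single [] (a * b)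
    = Poly_Mapping.single [] a * (Poly_Mapping.single [] b :: 'k::semiring_0 ncpoly)"
  by (simp add: mult_single plus_list_def)

definition nc_var :: "nat \<Rightarrow> ('k::semiring_1) ncpoly" where
  "nc_var i = Poly_Mapping.single [i] 1"

definition nc_monomial :: "nat list \<Rightarrow> ('k::semiring_1) ncpoly" where
  "nc_monomial w = prod_list (map nc_var w)"

definition nc_subst :: "(nat \<Rightarrow> ('k::comm_semiring_1) ncpoly) \<Rightarrow> 'k ncpoly \<Rightarrow> 'k ncpoly" where
  "nc_subst s p =
    (\<Sum>w\<in>Poly_Mapping.keys p. Poly_Mapping.single [] (Poly_Mapping.lookup p w) * prod_list (map s w))"

lemma nc_subst_superset:
  assumes "finite A" "Poly_Mapping.keys p \<subseteq> A"
  shows "nc_subst s p = (\<Sum>w\<in>A. Poly_Mapping.single [] (Poly_Mapping.lookup p w) * prod_list (map s w))"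
  unfolding nc_subst_def
  by (rule sum.mono_neutral_left) (use assms in \<open>auto simp: in_keys_iff\<close>)

lemma nc_subst_zero [simp]: "nc_subst s 0 = 0"
  by (simp add: nc_subst_def)

lemma nc_subst_add: "nc_subst s (p + q) = nc_subst s p + nc_subst s q"
proof -
  let ?A = "Poly_Mapping.keys p \<union> Poly_Mapping.keys q"
  let ?t = "\<lambda>r w. Poly_Mapping.single [] (Poly_Mapping.lookup r w) * prod_list (map s w)"
  have "nc_subst s (p + q) = (\<Sum>w\<in>?A. ?t (p + q) w)"
    by (rule nc_subst_superset) (auto simp: keys_add)
  also have "\<dots> = (\<Sum>w\<in>?A. ?t p w) + (\<Sum>w\<in>?A. ?t q w)"
    by (simp add: lookup_add single_add distrib_right sum.distrib)
  also have "\<dots> = nc_subst s p + nc_subst s q"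
    by (simp add: nc_subst_superset[of ?A p] nc_subst_superset[of ?A q])
  finally show ?thesis .
qed

lemma nc_subst_sum: "nc_subst s (sum f A) = (\<Sum>x\<in>A. nc_subst s (f x))"
  by (induction A rule: infinite_finite_induct) (simp_all add: nc_subst_add)

lemma nc_subst_single:
  "nc_subst s (Poly_Mapping.single w a) = Poly_Mapping.single [] a * prod_list (map s w)"
  using nc_subst_superset[of "{w}" "Poly_Mapping.single w a" s] by simp

lemma nc_subst_scalar:
  "nc_subst s (Poly_Mapping.single [] c * p) = Poly_Mapping.single [] c * nc_subst s p"
proof -
  have "nc_subst s (Poly_Mapping.single [] c * p)
      = (\<Sum>w\<in>Poly_Mapping.keys p.
          Poly_Mapping.single [] (Poly_Mapping.lookup (Poly_Mapping.single [] c * p) w) * prod_list (map s w))"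
    by (rule nc_subst_superset) (auto simp: in_keys_iff lookup_scalar_times)
  also have "\<dots> = (\<Sum>w\<in>Poly_Mapping.keys p.
      Poly_Mapping.single [] c * (Poly_Mapping.single [] (Poly_Mapping.lookup p w) * prod_list (map s w)))"
    by (simp add: lookup_scalar_times single_Nil_mult mult.assoc)
  also have "\<dots> = Poly_Mapping.single [] c * nc_subst s p"
    by (simp add: nc_subst_def sum_distrib_left)
  finally show ?thesis .
qed

lemma update_eq_add_single:
  "k \<notin> Poly_Mapping.keys f \<Longrightarrow> Poly_Mapping.update k b f = f + Poly_Mapping.single k b"
  by (rule poly_mapping_eqI) (auto simp: lookup_update lookup_add lookup_single in_keys_iff)

lemma nc_subst_single_mult:
  "nc_subst s (Poly_Mapping.single w a * q) = nc_subst s (Poly_Mapping.single w a) * nc_subst s q"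
proof (induction q rule: Poly_Mapping.update_induct)
  case const
  then show ?case by simp
next
  case (update q v b)
  have "Poly_Mapping.update v b q = q + Poly_Mapping.single v b"
    using update.hyps(1) by (rule update_eq_add_single)
  moreover have "nc_subst s (Poly_Mapping.single w a * Poly_Mapping.single v b)
      = nc_subst s (Poly_Mapping.single w a) * nc_subst s (Poly_Mapping.single v b)"
  proof -
    let ?a = "Poly_Mapping.single [] a" and ?b = "Poly_Mapping.single [] b"
    let ?w = "prod_list (map s w)" and ?v = "prod_list (map s v)"
    have "Poly_Mapping.single w a * Poly_Mapping.single v b = Poly_Mapping.single (w @ v) (a * b)"
      by (simp add: mult_single plus_list_def)
    then have "nc_subst s (Poly_Mapping.single w a * Poly_Mapping.single v b) = ?a * (?b * ?w) * ?v"
      by (simp add: nc_subst_single single_Nil_mult mult.assoc)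
    also have "\<dots> = (?a * ?w) * (?b * ?v)"
      by (simp add: scalar_commute[of b ?w] mult.assoc)
    finally show ?thesis
      by (simp add: nc_subst_single)
  qed
  ultimately show ?case
    using update.IH by (simp add: distrib_left nc_subst_add)
qed

lemma nc_subst_mult: "nc_subst s (p * q) = nc_subst s p * nc_subst s q"
proof (induction p rule: Poly_Mapping.update_induct)
  case const
  then show ?case by simp
next
  case (update p v b)
  have "Poly_Mapping.update v b p = p + Poly_Mapping.single v b"
    using update.hyps(1) by (rule update_eq_add_single)
  then show ?case
    using update.IH by (simp add: distrib_right nc_subst_add nc_subst_single_mult)
qed

lemma nc_subst_one: "nc_subst s 1 = 1"
  using nc_subst_single[of s "[]" 1] by simp

lemma nc_subst_var: "nc_subst s (nc_var i) = s i"
  by (simp add: nc_var_def nc_subst_single)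

lemma nc_subst_monomial: "nc_subst s (nc_monomial w) = prod_list (map s w)"
  by (induction w) (simp_all add: nc_monomial_def nc_subst_one nc_subst_mult nc_subst_var)

lemma lookup_Nil_nc_subst:
  assumes "\<And>i. Poly_Mapping.lookup (s i) [] = 0" and "Poly_Mapping.lookup p [] = 0"
  shows "Poly_Mapping.lookup (nc_subst s p) [] = 0"
proof -
  have "Poly_Mapping.lookup (prod_list (map s w)) [] = 0" if "w \<noteq> []" for w
    using that by (cases w) (simp_all add: lookup_Nil_times assms(1))
  moreover have "w \<noteq> []" if "w \<in> Poly_Mapping.keys p" for w
    using that assms(2) by (auto simp: in_keys_iff)
  ultimately show ?thesis
    by (simp add: nc_subst_def lookup_sum lookup_Nil_times)
qed

text \<open>Leibniz rule for the inner derivation \<open>[-, u]\<close>; distinctness of \<open>w\<close> makes updating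
  \<open>x\<close> at \<open>m\<close> change exactly one factor of the product.\<close>

lemma commutator_prod_list_distinct:
  fixes x :: "'b \<Rightarrow> 'a::ring_1"
  assumes "distinct w"
  shows "(\<Sum>m\<in>set w. prod_list (map (x(m := x m * u - u * x m)) w))
    = prod_list (map x w) * u - u * prod_list (map x w)"
  using assms
proof (induction w)
  case Nil
  then show ?case by simp
next
  case (Cons a w)
  let ?x = "\<lambda>m. x(m := x m * u - u * x m)"
  have "a \<notin> set w" "distinct w"
    using Cons.prems by simp_all
  have "map (?x a) w = map x w"
    using \<open>a \<notin> set w\<close> by (intro map_cong) auto
  then have head: "prod_list (map (?x a) (a # w)) = (x a * u - u * x a) * prod_list (map x w)"
    by (simp only: list.map prod_list.Cons fun_upd_same)
  have tail: "prod_list (map (?x m) (a # w)) = x a * prod_list (map (?x m) w)" if "m \<in> set w" for m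
    using that \<open>a \<notin> set w\<close> by auto
  have "(\<Sum>m\<in>set (a # w). prod_list (map (?x m) (a # w)))
      = prod_list (map (?x a) (a # w)) + (\<Sum>m\<in>set w. prod_list (map (?x m) (a # w)))"
    by (simp only: list.set(2) sum.insert[OF finite_set \<open>a \<notin> set w\<close>])
  also have "\<dots> = (x a * u - u * x a) * prod_list (map x w)
      + x a * (\<Sum>m\<in>set w. prod_list (map (?x m) w))"
    by (simp only: head tail sum_distrib_left cong: sum.cong)
  also have "\<dots> = (x a * u - u * x a) * prod_list (map x w)
      + x a * (prod_list (map x w) * u - u * prod_list (map x w))"
    by (simp only: Cons.IH[OF \<open>distinct w\<close>])
  also have "\<dots> = prod_list (map x (a # w)) * u - u * prod_list (map x (a # w))"
    by (simp add: algebra_simps)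
  finally show ?case .
qed

lemma commutator_sum_monomials:
  fixes U :: "('k::comm_ring_1) ncpoly"
  assumes "\<And>i. i \<in> I \<Longrightarrow> distinct (w i) \<and> set (w i) = A"
  defines "p \<equiv> \<Sum>i\<in>I. nc_monomial (w i)"
  shows "p * U - U * p = (\<Sum>m\<in>A. nc_subst (nc_var(m := nc_var m * U - U * nc_var m)) p)"
proof -
  let ?\<phi> = "\<lambda>m. nc_var(m := nc_var m * U - U * nc_var m)"
  have monomial: "nc_monomial (w i) * U - U * nc_monomial (w i)
      = (\<Sum>m\<in>A. nc_subst (?\<phi> m) (nc_monomial (w i)))" if "i \<in> I" for i
  proof -
    from assms(1)[OF that] have "distinct (w i)" and A: "set (w i) = A"
      by auto
    then show ?thesis
      using commutator_prod_list_distinct[of "w i" nc_var U, folded nc_monomial_def]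
      by (simp only: nc_subst_monomial A)
  qed
  have "p * U - U * p = (\<Sum>i\<in>I. nc_monomial (w i) * U - U * nc_monomial (w i))"
    by (simp add: p_def sum_distrib_left sum_distrib_right sum_subtractf)
  also have "\<dots> = (\<Sum>i\<in>I. \<Sum>m\<in>A. nc_subst (?\<phi> m) (nc_monomial (w i)))"
    by (rule sum.cong) (simp_all add: monomial)
  also have "\<dots> = (\<Sum>m\<in>A. nc_subst (?\<phi> m) p)"
    by (simp add: p_def nc_subst_sum sum.swap[of _ I])
  finally show ?thesis .
qed

lemma lookup_Abs_poly_mapping_FA: "f \<in> FA \<Longrightarrow> Poly_Mapping.lookup (Abs_poly_mapping f) = f"
  by (simp add: FA_def)

lemma lookup_in_FA: "Poly_Mapping.lookup p [] = 0 \<Longrightarrow> Poly_Mapping.lookup (p::'k::field ncpoly) \<in> FA"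
  by (simp add: FA_def flip: keys.rep_eq)

lemma fa_zero_lookup: "fa_zero = Poly_Mapping.lookup (0::'k::field ncpoly)"
  by (simp add: fun_eq_iff fa_zero_def)

lemma fa_add_lookup:
  "fa_add (Poly_Mapping.lookup p) (Poly_Mapping.lookup q) = Poly_Mapping.lookup (p + q :: 'k::field ncpoly)"
  by (simp add: fun_eq_iff fa_add_def lookup_add)

lemma fa_sub_lookup:
  "fa_sub (Poly_Mapping.lookup p) (Poly_Mapping.lookup q) = Poly_Mapping.lookup (p - q :: 'k::field ncpoly)"
  by (simp add: fun_eq_iff fa_sub_def lookup_minus)

lemma fa_smult_lookup:
  "fa_smult c (Poly_Mapping.lookup p) = Poly_Mapping.lookup (Poly_Mapping.single [] c * p :: 'k::field ncpoly)"
  by (simp add: fun_eq_iff fa_smult_def lookup_scalar_times)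

lemma fa_mult_lookup:
  "fa_mult (Poly_Mapping.lookup p) (Poly_Mapping.lookup q) = Poly_Mapping.lookup (p * q :: 'k::field ncpoly)"
  by (simp add: fun_eq_iff fa_mult_def lookup_times_ncpoly)

lemma fa_var_lookup: "fa_var i = Poly_Mapping.lookup (nc_var i :: 'k::field ncpoly)"
  by (simp add: fun_eq_iff fa_var_def nc_var_def lookup_single when_def)

lemma fa_listprod_lookup:
  "ps \<noteq> [] \<Longrightarrow>
    fa_listprod (map Poly_Mapping.lookup ps) = Poly_Mapping.lookup (prod_list ps :: 'k::field ncpoly)"
proof (induction ps rule: induct_list012)
  case (3 p q ps)
  then show ?case by (simp add: fa_mult_lookup)
qed simp_all

definition fa_subst :: "(nat \<Rightarrow> ('k::field) ncpoly) \<Rightarrow> 'k fa \<Rightarrow> 'k fa" where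
  "fa_subst s f = Poly_Mapping.lookup (nc_subst s (Abs_poly_mapping f))"

lemma fa_subst_lookup [simp]: "fa_subst s (Poly_Mapping.lookup p) = Poly_Mapping.lookup (nc_subst s p)"
  by (simp add: fa_subst_def)

lemma fa_endo_fa_subst:
  assumes "\<And>i. Poly_Mapping.lookup (s i) [] = (0::'k::field)"
  shows "fa_endo (fa_subst s)"
  unfolding fa_endo_def
proof (intro conjI ballI allI)
  fix f g :: "'k fa" and c :: 'k
  assume "f \<in> FA" "g \<in> FA"
  define p q where "p = Abs_poly_mapping f" and "q = Abs_poly_mapping g"
  have f: "f = Poly_Mapping.lookup p" "Poly_Mapping.lookup p [] = 0" and g: "g = Poly_Mapping.lookup q"
    using \<open>f \<in> FA\<close> \<open>g \<in> FA\<close>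
    by (simp_all add: p_def q_def lookup_Abs_poly_mapping_FA) (simp add: FA_def)
  show "fa_subst s f \<in> FA"
    using f by (simp add: lookup_in_FA lookup_Nil_nc_subst assms)
  show "fa_subst s (fa_smult c f) = fa_smult c (fa_subst s f)"
    using f by (simp add: fa_smult_lookup nc_subst_scalar)
  show "fa_subst s (fa_add f g) = fa_add (fa_subst s f) (fa_subst s g)"
    using f g by (simp add: fa_add_lookup nc_subst_add)
  show "fa_subst s (fa_mult f g) = fa_mult (fa_subst s f) (fa_subst s g)"
    using f g by (simp add: fa_mult_lookup nc_subst_mult)
qed

lemma T_space_lookup_sum:
  assumes "T_space V" "finite I" "\<And>i. i \<in> I \<Longrightarrow> Poly_Mapping.lookup (g i) \<in> V"
  shows "Poly_Mapping.lookup (sum g I :: 'k::field ncpoly) \<in> V"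
  using assms(2,3)
proof (induction I rule: finite_induct)
  case empty
  then show ?case
    using assms(1) by (simp add: T_space_def fa_subspace_def flip: fa_zero_lookup)
next
  case (insert i I)
  then show ?case
    using assms(1) by (simp add: T_space_def fa_subspace_def flip: fa_add_lookup)
qed

lemma lookup_sum_nc_subst_in_T_gen:
  assumes "finite A" "Poly_Mapping.lookup p \<in> S"
    and "\<And>m i. m \<in> A \<Longrightarrow> Poly_Mapping.lookup (s m i) [] = (0::'k::field)"
  shows "Poly_Mapping.lookup (\<Sum>m\<in>A. nc_subst (s m) p) \<in> T_gen S"
  unfolding T_gen_def
proof (rule InterI)
  fix V assume "V \<in> {V. T_space V \<and> S \<subseteq> V}"
  then have V: "T_space V" "Poly_Mapping.lookup p \<in> V"
    using assms(2) by auto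
  have "fa_subst (s m) (Poly_Mapping.lookup p) \<in> V" if "m \<in> A" for m
  proof -
    have "fa_endo (fa_subst (s m))"
      by (rule fa_endo_fa_subst) (rule assms(3)[OF that])
    then show ?thesis
      using V unfolding T_space_def by blast
  qed
  then show "Poly_Mapping.lookup (\<Sum>m\<in>A. nc_subst (s m) p) \<in> V"
    by (intro T_space_lookup_sum[OF V(1) assms(1)]) simp
qed

lemma S_poly_fa_var:
  assumes "0 < d"
  shows "S_poly d (\<lambda>i. fa_var (f i))
    = Poly_Mapping.lookup
        (\<Sum>\<sigma> | \<sigma> permutes {0..<d}. nc_monomial (map (f \<circ> \<sigma>) [0..<d]) :: 'k::field ncpoly)"
proof -
  have "fa_listprod (map (\<lambda>i. fa_var (f (\<sigma> i))) [0..<d])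
      = Poly_Mapping.lookup (nc_monomial (map (f \<circ> \<sigma>) [0..<d]) :: 'k ncpoly)" for \<sigma>
    using assms fa_listprod_lookup[of "map (\<lambda>i. nc_var (f (\<sigma> i))) [0..<d]"]
    by (simp add: nc_monomial_def fa_var_lookup o_def)
  then show ?thesis
    by (simp add: fun_eq_iff S_poly_def lookup_sum)
qed

lemma
  assumes "\<sigma> permutes {0..<d}" "inj f"
  shows distinct_map_permutes: "distinct (map (f \<circ> \<sigma>) [0..<d])"
    and set_map_permutes: "set (map (f \<circ> \<sigma>) [0..<d]) = f ` {0..<d}"
proof -
  show "distinct (map (f \<circ> \<sigma>) [0..<d])"
    using inj_compose[OF assms(2) permutes_inj[OF assms(1)]]
    by (simp add: distinct_map inj_on_subset[OF _ subset_UNIV])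
  show "set (map (f \<circ> \<sigma>) [0..<d]) = f ` {0..<d}"
    by (simp only: set_map set_upt image_comp[symmetric] permutes_image[OF assms(1)])
qed

theorem corollary2p1:
  fixes d :: nat and u :: "('k::field) fa"
  assumes "0 < d" and "u \<in> FA"
  shows "fa_comm (S_poly d (\<lambda>i. fa_var (Suc i))) u
           \<in> T_gen {S_poly d (\<lambda>i. fa_var (Suc i)) :: 'k fa}"
proof -
  define U :: "'k ncpoly" where "U = Abs_poly_mapping u"
  define S :: "'k ncpoly"
    where "S = (\<Sum>\<sigma> | \<sigma> permutes {0..<d}. nc_monomial (map (Suc \<circ> \<sigma>) [0..<d]))"
  let ?\<phi> = "\<lambda>m. nc_var(m := nc_var m * U - U * nc_var m)"
  have u: "u = Poly_Mapping.lookup U"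
    using assms(2) by (simp add: U_def lookup_Abs_poly_mapping_FA)
  have S_poly: "S_poly d (\<lambda>i. fa_var (Suc i)) = Poly_Mapping.lookup S"
    using S_poly_fa_var[OF assms(1)] by (simp add: S_def)
  have "S * U - U * S = (\<Sum>m\<in>Suc ` {0..<d}. nc_subst (?\<phi> m) S)"
    unfolding S_def using distinct_map_permutes[OF _ inj_Suc] set_map_permutes[OF _ inj_Suc]
    by (intro commutator_sum_monomials) auto
  then have "fa_comm (Poly_Mapping.lookup S) u
      = Poly_Mapping.lookup (\<Sum>m\<in>Suc ` {0..<d}. nc_subst (?\<phi> m) S)"
    by (simp add: u fa_comm_def fa_mult_lookup fa_sub_lookup)
  moreover have "Poly_Mapping.lookup (\<Sum>m\<in>Suc ` {0..<d}. nc_subst (?\<phi> m) S)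
      \<in> T_gen {Poly_Mapping.lookup S}"
    by (rule lookup_sum_nc_subst_in_T_gen)
      (simp_all add: nc_var_def lookup_minus lookup_Nil_times lookup_single)
  ultimately show ?thesis
    unfolding S_poly by simp
qed

end
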